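(* Let $X=\{x_j:j\in J\}\subset\mathbb{R}^2$ be a finite set of $n\geq 2$ distinct points, let $s^*$ be its quadratic min-power centre and $M$ its centroid, and let $k=\big|\arg\max_{j\in J}\|s^*-x_j\|\big|$ be the number of points of $X$ at maximum distance from $s^*$. Then $$\rho(X):=\frac{P(M)}{P(s^* )}\leq \frac{1}{k+1}\left(\frac{n+1}{n}\right)^2+\frac{k}{k+1}.$$
   Context: For $s\in\mathbb{R}^2$, $P(s)=\sum_{i\in J}\|s-x_i\|^2+\max_{i\in J}\|s-x_i\|^2$ (Euclidean norm); the min-power centre $s^*$ is the unique minimiser of $P$; $M=\frac1n\sum_{i\in J}x_i$. *)

theory Defs
  imports "HOL-Analysis.Analysis"
begin

definition qpower :: "'j set \<Rightarrow> ('j \<Rightarrow> real^2) \<Rightarrow> real^2 \<Rightarrow> real" where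
  "qpower J x s = (\<Sum>i\<in>J. (norm (s - x i))\<^sup>2) + (MAX i\<in>J. (norm (s - x i))\<^sup>2)"

definition minpower_centre :: "'j set \<Rightarrow> ('j \<Rightarrow> real^2) \<Rightarrow> real^2" where
  "minpower_centre J x = (THE s. \<forall>t. qpower J x s \<le> qpower J x t)"

definition centroid :: "'j set \<Rightarrow> ('j \<Rightarrow> real^2) \<Rightarrow> real^2" where
  "centroid J x = (1 / real (card J)) *\<^sub>R (\<Sum>i\<in>J. x i)"

end

theory Submission
  imports Defs
begin

text \<open>
  Let \<open>r\<close> be the largest distance from the min-power centre \<open>s\<^sup>*\<close> to a point of \<open>X\<close>.
  Moving \<open>s\<^sup>*\<close> a little towards \<open>M\<close> decreases the sum term of \<open>P\<close> at rate about \<open>2n |s\<^sup>* - M|\<close>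
  and increases the max term at rate at most \<open>2r\<close>; minimality therefore forces \<open>n |s\<^sup>* - M| \<le> r\<close>.
  Hence every point lies within \<open>r (n + 1) / n\<close> of \<open>M\<close>, and \<open>P(M) \<le> S + r\<^sup>2 ((n + 1) / n)\<^sup>2\<close>
  with \<open>S = \<Sum>|M - x\<^sub>j|\<^sup>2\<close>. On the other side \<open>P(s\<^sup>*) = T + r\<^sup>2\<close>, where \<open>T = \<Sum>|s\<^sup>* - x\<^sub>j|\<^sup>2\<close>
  is at least \<open>S\<close> (the centroid minimises the sum of squares) and at least \<open>k r\<^sup>2\<close>
  (\<open>k\<close> of the summands equal \<open>r\<^sup>2\<close>). Eliminating \<open>T\<close> between these bounds gives the claim.
\<close>

lemma sum_norm_diff_power2_barycentre:
  fixes x :: "'j \<Rightarrow> 'a::real_inner"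
  assumes "finite J" "J \<noteq> {}"
  defines "c \<equiv> (1 / real (card J)) *\<^sub>R (\<Sum>i\<in>J. x i)"
  shows "(\<Sum>i\<in>J. (norm (s - x i))\<^sup>2)
           = (\<Sum>i\<in>J. (norm (c - x i))\<^sup>2) + real (card J) * (norm (s - c))\<^sup>2"
proof -
  have "real (card J) *\<^sub>R c = (\<Sum>i\<in>J. x i)"
    using assms by (simp add: c_def card_gt_0_iff)
  then have deviations_cancel: "(\<Sum>i\<in>J. c - x i) = 0"
    by (simp add: sum_subtractf sum_constant_scaleR)
  have "(norm (s - x i))\<^sup>2 = (norm (s - c))\<^sup>2 + 2 * inner (s - c) (c - x i) + (norm (c - x i))\<^sup>2" for i
    using dot_norm[of "s - c" "c - x i"] by simp
  then have "(\<Sum>i\<in>J. (norm (s - x i))\<^sup>2)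
      = real (card J) * (norm (s - c))\<^sup>2 + 2 * inner (s - c) (\<Sum>i\<in>J. c - x i) + (\<Sum>i\<in>J. (norm (c - x i))\<^sup>2)"
    by (simp add: sum.distrib sum_distrib_left inner_sum_right)
  with deviations_cancel show ?thesis by simp
qed

lemma qpower_eq_centroid:
  assumes "finite J" "J \<noteq> {}"
  shows "qpower J x s = (\<Sum>i\<in>J. (norm (centroid J x - x i))\<^sup>2)
           + real (card J) * (norm (s - centroid J x))\<^sup>2 + (MAX i\<in>J. (norm (s - x i))\<^sup>2)"
  using sum_norm_diff_power2_barycentre[OF assms, of s x]
  by (simp add: qpower_def centroid_def)

lemma continuous_on_Max:
  fixes f :: "'i \<Rightarrow> 'a::topological_space \<Rightarrow> 'b::linorder_topology"
  assumes "finite A" "A \<noteq> {}" "\<And>i. i \<in> A \<Longrightarrow> continuous_on S (f i)"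
  shows "continuous_on S (\<lambda>s. MAX i\<in>A. f i s)"
  using assms
proof (induction A rule: finite_ne_induct)
  case (insert a A)
  then have "continuous_on S (\<lambda>s. max (f a s) (MAX i\<in>A. f i s))"
    by (intro continuous_on_max) auto
  with insert show ?case by simp
qed simp

lemma norm_midpoint_diff_power2:
  fixes a b c :: "'a::real_inner"
  shows "(norm (midpoint a b - c))\<^sup>2 = ((norm (a - c))\<^sup>2 + (norm (b - c))\<^sup>2) / 2 - (norm (a - b))\<^sup>2 / 4"
proof -
  have "midpoint a b - c = (1/2) *\<^sub>R ((a - c) + (b - c))"
    using scaleR_half_double[of c] by (simp add: midpoint_def algebra_simps)
  then have "(norm (midpoint a b - c))\<^sup>2 = (norm ((a - c) + (b - c)))\<^sup>2 / 4"
    by (simp add: power2_eq_square)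
  moreover have "(a - c) - (b - c) = a - b" by simp
  ultimately show ?thesis
    using dot_norm[of "a - c" "b - c"] dot_norm_neg[of "a - c" "b - c"] by (simp add: field_simps)
qed

lemma Max_power2_eq_power2_Max:
  fixes f :: "'i \<Rightarrow> real"
  assumes "finite A" "A \<noteq> {}" "\<And>i. i \<in> A \<Longrightarrow> 0 \<le> f i"
  shows "(MAX i\<in>A. (f i)\<^sup>2) = (MAX i\<in>A. f i)\<^sup>2"
proof (rule Max_eqI)
  have "(MAX i\<in>A. f i) \<in> f ` A"
    using assms by (intro Max_in) auto
  then show "(MAX i\<in>A. f i)\<^sup>2 \<in> (\<lambda>i. (f i)\<^sup>2) ` A"
    by auto
  show "y \<le> (MAX i\<in>A. f i)\<^sup>2" if "y \<in> (\<lambda>i. (f i)\<^sup>2) ` A" for y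
    using that assms by (auto intro!: power_mono)
qed (use assms in simp)

lemma Max_norm_diff_power2_midpoint_le:
  fixes x :: "'j \<Rightarrow> 'a::real_inner"
  assumes "finite J" "J \<noteq> {}"
  shows "(MAX i\<in>J. (norm (midpoint a b - x i))\<^sup>2)
           \<le> ((MAX i\<in>J. (norm (a - x i))\<^sup>2) + (MAX i\<in>J. (norm (b - x i))\<^sup>2)) / 2"
proof -
  have "(norm (midpoint a b - x i))\<^sup>2
          \<le> ((MAX i\<in>J. (norm (a - x i))\<^sup>2) + (MAX i\<in>J. (norm (b - x i))\<^sup>2)) / 2"
    if "i \<in> J" for i
  proof -
    have "(norm (a - x i))\<^sup>2 \<le> (MAX i\<in>J. (norm (a - x i))\<^sup>2)"
         "(norm (b - x i))\<^sup>2 \<le> (MAX i\<in>J. (norm (b - x i))\<^sup>2)"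
      using assms that by auto
    then show ?thesis
      using norm_midpoint_diff_power2[of a b "x i"] zero_le_power2[of "norm (a - b)"] by argo
  qed
  with assms show ?thesis by (intro Max.boundedI) auto
qed

lemma qpower_minimiser_unique:
  assumes J: "finite J" "J \<noteq> {}"
    and min1: "\<forall>t. qpower J x s1 \<le> qpower J x t" and min2: "\<forall>t. qpower J x s2 \<le> qpower J x t"
  shows "s1 = s2"
proof (rule ccontr)
  assume "s1 \<noteq> s2"
  define M where "M = centroid J x"
  define R where "R s = (MAX i\<in>J. (norm (s - x i))\<^sup>2)" for s
  define m where "m = midpoint s1 s2"
  have P: "qpower J x s = qpower J x M + real (card J) * (norm (s - M))\<^sup>2 + R s - R M" for s
    using qpower_eq_centroid[OF J, of x] by (simp add: M_def R_def)
  have "R m \<le> (R s1 + R s2) / 2"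
    unfolding R_def m_def by (rule Max_norm_diff_power2_midpoint_le[OF J])
  moreover have "(norm (m - M))\<^sup>2 < ((norm (s1 - M))\<^sup>2 + (norm (s2 - M))\<^sup>2) / 2"
  proof -
    have "0 < (norm (s1 - s2))\<^sup>2"
      using \<open>s1 \<noteq> s2\<close> by simp
    then show ?thesis
      using norm_midpoint_diff_power2[of s1 s2 M] unfolding m_def by linarith
  qed
  then have "real (card J) * (norm (m - M))\<^sup>2
               < (real (card J) * (norm (s1 - M))\<^sup>2 + real (card J) * (norm (s2 - M))\<^sup>2) / 2"
    using J by (simp add: card_gt_0_iff mult_strict_left_mono flip: distrib_left)
  moreover have "qpower J x s1 = qpower J x s2"
    using min1 min2 by (simp add: order_antisym)
  ultimately have "qpower J x m < qpower J x s1"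
    unfolding P[of m] P[of s1] P[of s2] by argo
  with min1 show False by (meson leD)
qed

lemma qpower_minimiser_exists:
  assumes J: "finite J" "J \<noteq> {}"
  shows "\<exists>s. \<forall>t. qpower J x s \<le> qpower J x t"
proof -
  define M where "M = centroid J x"
  define R where "R s = (MAX i\<in>J. (norm (s - x i))\<^sup>2)" for s
  define \<rho> where "\<rho> = sqrt (R M)"
  have P: "qpower J x s = qpower J x M + real (card J) * (norm (s - M))\<^sup>2 + R s - R M" for s
    using qpower_eq_centroid[OF J, of x] by (simp add: M_def R_def)
  have R_nonneg: "R s \<ge> 0" for s
    using J by (auto simp: R_def Max_ge_iff)
  have card_ge_1: "real (card J) \<ge> 1"
    using J by (simp add: Suc_le_eq card_gt_0_iff)
  have far_from_centroid: "qpower J x M \<le> qpower J x t" if "t \<notin> cball M \<rho>" for t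
  proof -
    have "sqrt (R M) < norm (t - M)"
      using that by (simp add: \<rho>_def dist_norm norm_minus_commute)
    then have "(sqrt (R M))\<^sup>2 < (norm (t - M))\<^sup>2"
      using R_nonneg[of M] by (intro power_strict_mono) auto
    then have "R M < (norm (t - M))\<^sup>2"
      using R_nonneg[of M] by simp
    also have "\<dots> \<le> real (card J) * (norm (t - M))\<^sup>2"
      using card_ge_1 by (simp add: mult_le_cancel_right1)
    finally show ?thesis
      using P[of t] R_nonneg[of t] by linarith
  qed
  have "continuous_on (cball M \<rho>) (qpower J x)"
    unfolding qpower_def by (intro continuous_intros continuous_on_Max J)
  moreover have "M \<in> cball M \<rho>"
    using R_nonneg[of M] by (simp add: \<rho>_def)
  ultimately obtain s where s_min: "\<And>t. t \<in> cball M \<rho> \<Longrightarrow> qpower J x s \<le> qpower J x t"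
    using continuous_attains_inf[OF compact_cball] by blast
  have "qpower J x s \<le> qpower J x t" for t
    using far_from_centroid[of t] s_min[of t] s_min[OF \<open>M \<in> cball M \<rho>\<close>]
    by (cases "t \<in> cball M \<rho>") auto
  then show ?thesis by blast
qed

lemma qpower_minpower_centre_le:
  assumes "finite J" "J \<noteq> {}"
  shows "qpower J x (minpower_centre J x) \<le> qpower J x t"
proof -
  have "\<exists>!s. \<forall>t. qpower J x s \<le> qpower J x t"
    using qpower_minimiser_exists[OF assms] qpower_minimiser_unique[OF assms] by blast
  from theI'[OF this] show ?thesis
    unfolding minpower_centre_def by blast
qed

lemma mult_dist_le_Max_dist_of_minimiser:
  fixes x :: "'j \<Rightarrow> 'a::real_normed_vector"
  assumes J: "finite J" "J \<noteq> {}" and "N > 0"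
    and min: "\<And>t. N * (norm (s - c))\<^sup>2 + (MAX i\<in>J. (norm (s - x i))\<^sup>2)
                    \<le> N * (norm (t - c))\<^sup>2 + (MAX i\<in>J. (norm (t - x i))\<^sup>2)"
  shows "N * norm (s - c) \<le> (MAX i\<in>J. norm (s - x i))"
proof (rule ccontr)
  define r where "r = (MAX i\<in>J. norm (s - x i))"
  define D where "D = norm (s - c)"
  assume "\<not> N * norm (s - c) \<le> (MAX i\<in>J. norm (s - x i))"
  then have gap: "r < N * D" by (simp add: r_def D_def)
  have r_ge: "norm (s - x i) \<le> r" if "i \<in> J" for i
    using J that by (simp add: r_def)
  have "0 \<le> r"
    using J by (auto simp: r_def Max_ge_iff)
  with gap have "0 < N * D" by linarith
  with \<open>N > 0\<close> have "D > 0"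
    by (simp add: zero_less_mult_iff)
  txt \<open>Moving \<open>s\<close> by \<open>t\<close> times \<open>c - s\<close> changes the objective by at most
    \<open>t D ((N + 1) t D - 2 (N D - r))\<close>; this \<open>t\<close> makes the change \<open>-t D (N D - r)\<close>.\<close>
  define t where "t = (N * D - r) / ((N + 1) * D)"
  have "t > 0" and step: "(N + 1) * t * D = N * D - r"
    using gap \<open>D > 0\<close> \<open>N > 0\<close> by (simp_all add: t_def)
  define s' where "s' = s - t *\<^sub>R (s - c)"
  have "(norm (s' - c))\<^sup>2 = ((1 - t) * D)\<^sup>2"
  proof -
    have "s' - c = (1 - t) *\<^sub>R (s - c)" by (simp add: s'_def algebra_simps)
    then show ?thesis by (simp add: D_def power_mult_distrib)
  qed
  moreover have "(MAX i\<in>J. (norm (s' - x i))\<^sup>2) \<le> (r + t * D)\<^sup>2"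
  proof (intro Max.boundedI)
    fix y assume "y \<in> (\<lambda>i. (norm (s' - x i))\<^sup>2) ` J"
    then obtain i where "i \<in> J" and y: "y = (norm (s' - x i))\<^sup>2" by blast
    have "s' - x i = (s - x i) - t *\<^sub>R (s - c)"
      by (simp add: s'_def algebra_simps)
    then have "norm (s' - x i) \<le> norm (s - x i) + norm (t *\<^sub>R (s - c))"
      using norm_triangle_ineq4 by metis
    also have "\<dots> \<le> r + t * D"
      using r_ge[OF \<open>i \<in> J\<close>] \<open>t > 0\<close> by (simp add: D_def)
    finally show "y \<le> (r + t * D)\<^sup>2"
      unfolding y by (simp add: power_mono)
  qed (use J in auto)
  ultimately have "N * (norm (s' - c))\<^sup>2 + (MAX i\<in>J. (norm (s' - x i))\<^sup>2)
                    \<le> N * ((1 - t) * D)\<^sup>2 + (r + t * D)\<^sup>2"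
    using \<open>N > 0\<close> by simp
  also have "\<dots> = N * D\<^sup>2 + r\<^sup>2 + t * D * ((N + 1) * t * D - 2 * N * D + 2 * r)"
    by (simp add: power2_eq_square algebra_simps)
  also have "\<dots> = N * D\<^sup>2 + r\<^sup>2 - t * D * (N * D - r)"
    unfolding step by (simp add: algebra_simps)
  also have "\<dots> < N * D\<^sup>2 + r\<^sup>2"
    using \<open>t > 0\<close> \<open>D > 0\<close> gap by simp
  also have "\<dots> = N * (norm (s - c))\<^sup>2 + (MAX i\<in>J. (norm (s - x i))\<^sup>2)"
    unfolding r_def D_def using J by (simp add: Max_power2_eq_power2_Max)
  finally have "N * (norm (s' - c))\<^sup>2 + (MAX i\<in>J. (norm (s' - x i))\<^sup>2)
                  < N * (norm (s - c))\<^sup>2 + (MAX i\<in>J. (norm (s - x i))\<^sup>2)" .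
  with min[of s'] show False by simp
qed

lemma card_mult_dist_minpower_centre_centroid_le:
  assumes J: "finite J" "J \<noteq> {}"
  shows "real (card J) * norm (minpower_centre J x - centroid J x)
           \<le> (MAX i\<in>J. norm (minpower_centre J x - x i))"
proof (rule mult_dist_le_Max_dist_of_minimiser[OF J])
  show "real (card J) > 0"
    using J by (simp add: card_gt_0_iff)
  show "real (card J) * (norm (minpower_centre J x - centroid J x))\<^sup>2
          + (MAX i\<in>J. (norm (minpower_centre J x - x i))\<^sup>2)
        \<le> real (card J) * (norm (t - centroid J x))\<^sup>2 + (MAX i\<in>J. (norm (t - x i))\<^sup>2)" for t
    using qpower_minpower_centre_le[OF J, of x t] by (simp add: qpower_eq_centroid[OF J])
qed

lemma qpower_centroid_le:
  assumes J: "finite J" "J \<noteq> {}"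
  shows "qpower J x (centroid J x) \<le> (\<Sum>i\<in>J. (norm (centroid J x - x i))\<^sup>2)
           + (MAX i\<in>J. norm (minpower_centre J x - x i))\<^sup>2 * ((real (card J) + 1) / real (card J))\<^sup>2"
proof -
  define s where "s = minpower_centre J x"
  define M where "M = centroid J x"
  define r where "r = (MAX i\<in>J. norm (s - x i))"
  define n where "n = real (card J)"
  have "n > 0"
    using J by (simp add: n_def card_gt_0_iff)
  have "norm (s - M) \<le> r / n"
    using card_mult_dist_minpower_centre_centroid_le[OF J, of x] \<open>n > 0\<close>
    by (simp add: s_def M_def r_def n_def field_simps)
  have "(norm (M - x i))\<^sup>2 \<le> r\<^sup>2 * ((n + 1) / n)\<^sup>2" if "i \<in> J" for i
  proof -
    have "M - x i = (s - x i) - (s - M)"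
      by simp
    then have "norm (M - x i) \<le> norm (s - x i) + norm (s - M)"
      using norm_triangle_ineq4 by metis
    also have "\<dots> \<le> r + r / n"
      using \<open>norm (s - M) \<le> r / n\<close> J that unfolding r_def by (intro add_mono Max_ge) auto
    also have "\<dots> = r * ((n + 1) / n)"
      using \<open>n > 0\<close> by (simp add: field_simps)
    finally have "(norm (M - x i))\<^sup>2 \<le> (r * ((n + 1) / n))\<^sup>2"
      by (rule power_mono) simp
    then show ?thesis
      by (simp only: power_mult_distrib)
  qed
  with J have "(MAX i\<in>J. (norm (M - x i))\<^sup>2) \<le> r\<^sup>2 * ((n + 1) / n)\<^sup>2"
    by (intro Max.boundedI) auto
  then show ?thesis
    by (simp add: qpower_def s_def M_def r_def n_def)
qed

lemma Max_dist_pos: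
  fixes x :: "'j \<Rightarrow> 'a::real_normed_vector"
  assumes "finite J" "card J \<ge> 2" "inj_on x J"
  shows "0 < (MAX i\<in>J. norm (s - x i))"
proof -
  have "\<not> card J \<le> Suc 0"
    using assms(2) by simp
  then obtain i j where "i \<in> J" "j \<in> J" "i \<noteq> j"
    using card_le_Suc0_iff_eq[OF assms(1)] by blast
  with assms(3) have "x i \<noteq> x j"
    by (auto dest: inj_onD)
  then obtain l where "l \<in> J" "0 < norm (s - x l)"
    using \<open>i \<in> J\<close> \<open>j \<in> J\<close> by (metis zero_less_norm_iff right_minus_eq)
  moreover have "norm (s - x l) \<le> (MAX i\<in>J. norm (s - x i))"
    using \<open>finite J\<close> \<open>l \<in> J\<close> by (intro Max_ge) auto
  ultimately show ?thesis
    by linarith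
qed

lemma card_at_dist_mult_power2_le_sum:
  fixes x :: "'j \<Rightarrow> 'a::real_normed_vector"
  assumes "finite J"
  shows "real (card {j\<in>J. norm (s - x j) = r}) * r\<^sup>2 \<le> (\<Sum>i\<in>J. (norm (s - x i))\<^sup>2)"
proof -
  have "real (card {j\<in>J. norm (s - x j) = r}) * r\<^sup>2 = (\<Sum>i\<in>{j\<in>J. norm (s - x j) = r}. (norm (s - x i))\<^sup>2)"
    by simp
  also have "\<dots> \<le> (\<Sum>i\<in>J. (norm (s - x i))\<^sup>2)"
    using assms by (intro sum_mono2) auto
  finally show ?thesis .
qed

lemma ratio_le_convex_combination:
  fixes S T r q K Pc Ps :: real
  assumes "S \<le> T" "K * r\<^sup>2 \<le> T" "q \<ge> 1" "K \<ge> 0" "r > 0"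
    and "Pc \<le> S + r\<^sup>2 * q" "Ps = T + r\<^sup>2"
  shows "Pc / Ps \<le> 1 / (K + 1) * q + K / (K + 1)"
proof -
  have "0 \<le> K * r\<^sup>2" and "0 < r\<^sup>2"
    using assms by simp_all
  with assms have "Ps > 0" by linarith
  have "(K + 1) * Pc \<le> (K + 1) * (S + r\<^sup>2 * q)"
    using assms by (intro mult_left_mono) simp_all
  also have "\<dots> \<le> (q + K) * Ps"
  proof -
    have "(q + K) * (T + r\<^sup>2) - (K + 1) * (S + r\<^sup>2 * q) = (q - 1) * (T - K * r\<^sup>2) + (K + 1) * (T - S)"
      by (simp add: algebra_simps)
    moreover have "(q - 1) * (T - K * r\<^sup>2) \<ge> 0" "(K + 1) * (T - S) \<ge> 0"
      using assms by simp_all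
    ultimately show ?thesis
      unfolding assms(7) by linarith
  qed
  finally have "(K + 1) * Pc \<le> (q + K) * Ps" .
  with \<open>Ps > 0\<close> \<open>K \<ge> 0\<close> have "Pc / Ps \<le> (q + K) / (K + 1)"
    by (simp add: field_simps)
  then show ?thesis
    by (simp add: add_divide_distrib)
qed

theorem theorem2:
  fixes J :: "'j set" and x :: "'j \<Rightarrow> real^2" and n k :: nat
  assumes "finite J" and "card J = n" and "n \<ge> 2" and "inj_on x J"
    and "k = card {j\<in>J. norm (minpower_centre J x - x j)
                        = (MAX i\<in>J. norm (minpower_centre J x - x i))}"
  shows "qpower J x (centroid J x) / qpower J x (minpower_centre J x)
           \<le> 1 / (real k + 1) * ((real n + 1) / real n)\<^sup>2 + real k / (real k + 1)"
proof (rule ratio_le_convex_combination)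
  let ?s = "minpower_centre J x" and ?M = "centroid J x"
  define r where "r = (MAX i\<in>J. norm (?s - x i))"
  have J: "J \<noteq> {}"
    using assms(2,3) by auto
  show "(\<Sum>i\<in>J. (norm (?M - x i))\<^sup>2) \<le> (\<Sum>i\<in>J. (norm (?s - x i))\<^sup>2)"
    using sum_norm_diff_power2_barycentre[OF \<open>finite J\<close> J, of ?s x] by (simp add: centroid_def)
  show "real k * r\<^sup>2 \<le> (\<Sum>i\<in>J. (norm (?s - x i))\<^sup>2)"
    unfolding assms(5) r_def using \<open>finite J\<close> by (rule card_at_dist_mult_power2_le_sum)
  show "qpower J x ?s = (\<Sum>i\<in>J. (norm (?s - x i))\<^sup>2) + r\<^sup>2"
    using \<open>finite J\<close> J by (simp add: qpower_def r_def Max_power2_eq_power2_Max)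
  show "qpower J x ?M \<le> (\<Sum>i\<in>J. (norm (?M - x i))\<^sup>2) + r\<^sup>2 * ((real n + 1) / real n)\<^sup>2"
    using qpower_centroid_le[OF \<open>finite J\<close> J, of x] assms(2) by (simp add: r_def)
  show "r > 0"
    unfolding r_def using assms(1-4) by (intro Max_dist_pos) auto
qed (use assms(3) in auto)

end
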